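(* Let $E$ be an acyclic directed graph and let $G(E)$ be a dense subsemigroup of a topological semigroup $S$. Then $s^2=0$ for every element $s\in S$ which is not an idempotent.
   Context: All spaces are Hausdorff. A directed graph $E=(E^0,E^1,r,s)$ has vertices $E^0$, edges $E^1$, source/range maps $s,r:E^1\to E^0$; paths are vertices and sequences of edges $e_1\ldots e_n$ with $r(e_i)=s(e_{i+1})$; a cycle is a path of non-zero length with equal source and range; acyclic means no cycles. The graph inverse semigroup $G(E)$ is the semigroup with zero $0$ generated by $E^0$, $E^1$, $E^{-1}=\{e^{-1}\mid e\in E^1\}$ subject to: for $a,b\in E^0$, $e,f\in E^1$: $ab=a$ if $a=b$, else $0$; $s(e)e=er(e)=e$; $e^{-1}s(e)=r(e)e^{-1}=e^{-1}$; $e^{-1}f=r(e)$ if $e=f$, else $0$. *)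

theory Defs
  imports "HOL-Analysis.Analysis" "HOL-Library.Sublist"
begin

definition digraph :: "'v set \<Rightarrow> 'e set \<Rightarrow> ('e \<Rightarrow> 'v) \<Rightarrow> ('e \<Rightarrow> 'v) \<Rightarrow> bool" where
  "digraph V Ed src rng \<longleftrightarrow> (\<forall>e\<in>Ed. src e \<in> V \<and> rng e \<in> V)"

text \<open>A path is represented as a pair (v, es) of its source vertex v and its list of
  edges es.  If es = [] it is the vertex v (a path of length zero); otherwise
  v = s(first edge) and consecutive edges satisfy r(e_i) = s(e_{i+1}).\<close>

type_synonym ('v,'e) gpath = "'v \<times> 'e list"

definition is_path :: "'v set \<Rightarrow> 'e set \<Rightarrow> ('e \<Rightarrow> 'v) \<Rightarrow> ('e \<Rightarrow> 'v) \<Rightarrow> ('v,'e) gpath \<Rightarrow> bool" where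
  "is_path V Ed src rng p \<longleftrightarrow>
     fst p \<in> V \<and> set (snd p) \<subseteq> Ed \<and>
     (snd p \<noteq> [] \<longrightarrow> src (hd (snd p)) = fst p) \<and>
     (\<forall>i. Suc i < length (snd p) \<longrightarrow> rng (snd p ! i) = src (snd p ! Suc i))"

definition path_rng :: "('e \<Rightarrow> 'v) \<Rightarrow> ('v,'e) gpath \<Rightarrow> 'v" where
  "path_rng rng p = (if snd p = [] then fst p else rng (last (snd p)))"

definition acyclic_graph :: "'v set \<Rightarrow> 'e set \<Rightarrow> ('e \<Rightarrow> 'v) \<Rightarrow> ('e \<Rightarrow> 'v) \<Rightarrow> bool" where
  "acyclic_graph V Ed src rng \<longleftrightarrow>
     \<not> (\<exists>p. is_path V Ed src rng p \<and> snd p \<noteq> [] \<and> path_rng rng p = fst p)"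

text \<open>The graph inverse semigroup G(E), in its standard normal form:
  None is the zero 0, and Some (a, b) with r(a) = r(b) stands for a b^{-1}.
  Multiplication: (a b^{-1})(c d^{-1}) = a p d^{-1} if c = b p,
  = a (d p)^{-1} if b = c p, and 0 otherwise.\<close>

type_synonym ('v,'e) gis = "(('v,'e) gpath \<times> ('v,'e) gpath) option"

definition gis_carrier :: "'v set \<Rightarrow> 'e set \<Rightarrow> ('e \<Rightarrow> 'v) \<Rightarrow> ('e \<Rightarrow> 'v) \<Rightarrow> ('v,'e) gis set" where
  "gis_carrier V Ed src rng =
     insert None {Some (a, b) | a b. is_path V Ed src rng a \<and> is_path V Ed src rng b
                                     \<and> path_rng rng a = path_rng rng b}"

fun gis_mult :: "('v,'e) gis \<Rightarrow> ('v,'e) gis \<Rightarrow> ('v,'e) gis" where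
  "gis_mult None y = None"
| "gis_mult (Some _) None = None"
| "gis_mult (Some (a, b)) (Some (c, d)) =
     (if fst b = fst c \<and> prefix (snd b) (snd c)
      then Some ((fst a, snd a @ drop (length (snd b)) (snd c)), d)
      else if fst b = fst c \<and> prefix (snd c) (snd b)
      then Some (a, (fst d, snd d @ drop (length (snd c)) (snd b)))
      else None)"

end

theory Submission
  imports Defs
begin

text \<open>In the graph inverse semigroup of an acyclic graph every element x satisfies
  x x = x or x x = 0: for x = a b^-1 the square is nonzero only if one of a, b is a
  prefix of the other, and then the remaining suffix is a path from r(a) = r(b) back to
  itself, hence empty, so that a = b and x is idempotent.  Since squaring is continuous
  and S is Hausdorff, the set of s with s s = s or s s = 0 is closed; it contains the
  dense subsemigroup G(E), so it is all of S.\<close>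

lemma path_rng_append:
  "p \<noteq> [] \<Longrightarrow> path_rng rng (v', p) = path_rng rng (v, l @ p)"
  by (simp add: path_rng_def)

lemma path_rng_in_vertices:
  assumes "digraph V Ed src rng" and "is_path V Ed src rng q"
  shows "path_rng rng q \<in> V"
  using assms by (cases "snd q = []") (auto simp: path_rng_def digraph_def is_path_def dest!: last_in_set)

lemma is_path_suffix:
  assumes graph: "digraph V Ed src rng" and path: "is_path V Ed src rng (v, l @ p)"
    and "p \<noteq> []"
  shows "is_path V Ed src rng (path_rng rng (v, l), p)"
proof -
  from path have edges: "set l \<subseteq> Ed" "set p \<subseteq> Ed"
    and head: "src (hd (l @ p)) = v"
    and chain: "\<And>i. Suc i < length (l @ p) \<Longrightarrow> rng ((l @ p) ! i) = src ((l @ p) ! Suc i)"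
    using \<open>p \<noteq> []\<close> by (auto simp: is_path_def)
  have "rng (l ! i) = src (l ! Suc i)" if "Suc i < length l" for i
    using chain[of i] that by (simp add: nth_append)
  then have "is_path V Ed src rng (v, l)"
    using path by (auto simp: is_path_def)
  then have start: "path_rng rng (v, l) \<in> V"
    using path_rng_in_vertices[OF graph] by blast
  have "src (hd p) = path_rng rng (v, l)"
  proof (cases "l = []")
    case True
    then show ?thesis using head by (simp add: path_rng_def)
  next
    case False
    have "Suc (length l - 1) < length (l @ p)" using False \<open>p \<noteq> []\<close> by simp
    from chain[OF this] False show ?thesis
      by (simp add: nth_append last_conv_nth hd_conv_nth \<open>p \<noteq> []\<close> path_rng_def)
  qed
  moreover have "rng (p ! i) = src (p ! Suc i)" if "Suc i < length p" for i
    using chain[of "length l + i"] that by (simp add: nth_append flip: add_Suc_right)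
  ultimately show ?thesis
    using start edges by (simp add: is_path_def)
qed

lemma acyclic_path_rng_append_eq:
  assumes "digraph V Ed src rng" and "acyclic_graph V Ed src rng"
    and "is_path V Ed src rng (v, l @ p)"
    and "path_rng rng (v, l) = path_rng rng (v, l @ p)"
  shows "p = []"
proof (rule ccontr)
  assume "p \<noteq> []"
  then have "is_path V Ed src rng (path_rng rng (v, l), p)"
    and "path_rng rng (path_rng rng (v, l), p) = path_rng rng (v, l)"
    using is_path_suffix[OF assms(1,3)] path_rng_append assms(4) by metis+
  with \<open>p \<noteq> []\<close> \<open>acyclic_graph V Ed src rng\<close> show False
    unfolding acyclic_graph_def by fastforce
qed

lemma gis_mult_self:
  assumes graph: "digraph V Ed src rng" and acyc: "acyclic_graph V Ed src rng"
    and x: "x \<in> gis_carrier V Ed src rng"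
  shows "gis_mult x x = x \<or> gis_mult x x = None"
proof (cases x)
  case (Some ab)
  then obtain va la vb lb where x_eq: "x = Some ((va, la), (vb, lb))"
    by (metis prod.collapse)
  from x x_eq have paths: "is_path V Ed src rng (va, la)" "is_path V Ed src rng (vb, lb)"
    and same_rng: "path_rng rng (va, la) = path_rng rng (vb, lb)"
    by (auto simp: gis_carrier_def)
  have "lb = la" if "vb = va" and "prefix lb la"
  proof -
    obtain p where "la = lb @ p" using \<open>prefix lb la\<close> by (auto simp: prefix_def)
    with that paths same_rng have "p = []"
      using acyclic_path_rng_append_eq[OF graph acyc, of vb lb p] by simp
    with \<open>la = lb @ p\<close> show ?thesis by simp
  qed
  moreover have "la = lb" if "vb = va" and "prefix la lb"
  proof -
    obtain p where "lb = la @ p" using \<open>prefix la lb\<close> by (auto simp: prefix_def)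
    with that paths same_rng have "p = []"
      using acyclic_path_rng_append_eq[OF graph acyc, of va la p] by simp
    with \<open>lb = la @ p\<close> show ?thesis by simp
  qed
  ultimately show ?thesis
    using x_eq by auto
qed simp

lemma continuous_on_square:
  assumes "continuous_on UNIV (\<lambda>p::'a::{topological_space, times} \<times> 'a. fst p * snd p)"
  shows "continuous_on UNIV (\<lambda>s::'a. s * s)"
  using continuous_on_compose[OF continuous_on_Pair[OF continuous_on_id continuous_on_id]
      continuous_on_subset[OF assms]]
  by (simp add: o_def)

lemma square_idempotent_or_zero_closure:
  fixes A :: "'a::{t2_space, times} set"
  assumes "continuous_on UNIV (\<lambda>p::'a \<times> 'a. fst p * snd p)"
    and "\<forall>a\<in>A. a * a = a \<or> a * a = z"
    and "s \<in> closure A"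
  shows "s * s = s \<or> s * s = z"
proof -
  let ?C = "{s. s * s = s} \<union> {s. s * s = z}"
  have "closed ?C"
    using continuous_on_square[OF assms(1)]
    by (intro closed_Un closed_Collect_eq continuous_intros)
  moreover have "A \<subseteq> ?C" using assms(2) by blast
  ultimately have "closure A \<subseteq> ?C" by (rule closure_minimal[rotated])
  with assms(3) show ?thesis by blast
qed

theorem lemma4p2:
  fixes V :: "'v set" and Ed :: "'e set" and src rng :: "'e \<Rightarrow> 'v"
    and h :: "('v,'e) gis \<Rightarrow> 'b::{t2_space, semigroup_mult}"
  assumes graph: "digraph V Ed src rng"
    and acyc: "acyclic_graph V Ed src rng"
    and cont_mult: "continuous_on UNIV (\<lambda>p::'b \<times> 'b. fst p * snd p)"
    and inj: "inj_on h (gis_carrier V Ed src rng)"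
    and hom: "\<forall>x\<in>gis_carrier V Ed src rng. \<forall>y\<in>gis_carrier V Ed src rng.
                h (gis_mult x y) = h x * h y"
    and dense: "closure (h ` gis_carrier V Ed src rng) = UNIV"
  shows "\<forall>s::'b. s * s \<noteq> s \<longrightarrow> s * s = h None"
proof -
  have "\<forall>a\<in>h ` gis_carrier V Ed src rng. a * a = a \<or> a * a = h None"
  proof
    fix a assume "a \<in> h ` gis_carrier V Ed src rng"
    then obtain x where x: "x \<in> gis_carrier V Ed src rng" and "a = h x" by blast
    then have "a * a = h (gis_mult x x)" using hom by simp
    with gis_mult_self[OF graph acyc x] \<open>a = h x\<close> show "a * a = a \<or> a * a = h None"
      by auto
  qed
  with square_idempotent_or_zero_closure[OF cont_mult] dense show ?thesis
    by blast
qed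

end
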